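(* The VC-dimension of the edge relation on the Hamming graph $H(d,q)$ equals $3$ if and only if at least one of the following holds: (1) $d\ge 3$ and $q\ge 3$; (2) $d\ge 2$ and $q\ge 4$; (3) $d\ge 4$ and $q\ge 2$.
   Context: For $d,q\in\mathbb N$ and a set $S$ with $|S|=q$, the Hamming graph $H(d,q)$ has vertex set $S^d$, two vertices adjacent iff they agree in all but exactly one coordinate. The VC-dimension of the edge relation on a graph $G$ is the largest size of a set $A\subseteq V(G)$ such that $\{A\cap N(v)\mid v\in V(G)\}$ equals the power set of $A$, where $N(v)$ is the set of vertices adjacent to $v$. *)

theory Defs
  imports Main
begin

definition hamming_vertices :: "nat \<Rightarrow> 'a set \<Rightarrow> 'a list set" where
  "hamming_vertices d S = {xs. length xs = d \<and> set xs \<subseteq> S}"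

definition hamming_adj :: "nat \<Rightarrow> 'a list \<Rightarrow> 'a list \<Rightarrow> bool" where
  "hamming_adj d xs ys \<longleftrightarrow> card {i. i < d \<and> xs ! i \<noteq> ys ! i} = 1"

definition nbhd :: "'v set \<Rightarrow> ('v \<Rightarrow> 'v \<Rightarrow> bool) \<Rightarrow> 'v \<Rightarrow> 'v set" where
  "nbhd V E v = {u \<in> V. E v u}"

definition edge_shatters :: "'v set \<Rightarrow> ('v \<Rightarrow> 'v \<Rightarrow> bool) \<Rightarrow> 'v set \<Rightarrow> bool" where
  "edge_shatters V E A \<longleftrightarrow> A \<subseteq> V \<and> (\<lambda>v. A \<inter> nbhd V E v) ` V = Pow A"

text \<open>VC-dimension of the edge relation: largest size of a shattered set
  (Sup on nat; 0 if nothing is shattered).\<close>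
definition vc_dim_edge :: "'v set \<Rightarrow> ('v \<Rightarrow> 'v \<Rightarrow> bool) \<Rightarrow> nat" where
  "vc_dim_edge V E = Sup {card A | A. edge_shatters V E A}"

end

theory Submission
  imports Defs
begin

(*
  Call x a neighbour of v in direction i if x and v differ exactly in coordinate i; the words
  agreeing with v off coordinate i form the line through v in direction i. Two neighbours of v in
  different directions span a square and have only two common neighbours, v and the opposite
  corner; two neighbours of v in the same direction have all their common neighbours on their
  line, and on a line adjacency just means a different value in that coordinate.

  If {a, b, c, e} were shattered, with common neighbour v, the witnesses for {a, b, c} and
  {a, b, e} would be two distinct common neighbours of a and b other than v, so all four points
  lie on one line through v. The witness for {a, b} then lies on that line too and is adjacent
  to every point of it but itself, so it cannot miss both c and e.

  If {a, b, c} is shattered, with common neighbour v, compare the directions of a, b, c seen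
  from v. When all three agree, their line carries the four symbols of a, b, c and v, and the
  witness for {a} must leave the line, so d >= 2. When exactly two agree, their line carries
  their two symbols, that of v and that of the witness for the pair. When all three differ,
  d >= 3, and the witness for {a} differs from a either in a fourth coordinate or in one of the
  three directions, where it needs a third symbol. Conversely, explicit triples are shattered in
  H(3,3), H(2,4) and H(4,2), and they stay shattered after padding all words with a constant
  symbol.
*)

lemma obtain_distinct_list:
  assumes "k \<le> card A"
  obtains xs where "length xs = k" "distinct xs" "set xs \<subseteq> A"
proof -
  obtain T where "T \<subseteq> A" "card T = k" "finite T"
    using assms obtain_subset_with_card_n by metis
  moreover obtain xs where "set xs = T" "distinct xs"
    using \<open>finite T\<close> finite_distinct_list by blast
  ultimately show ?thesis using that distinct_card by metis
qed

lemma distinct_length_le_card: "finite S \<Longrightarrow> distinct xs \<Longrightarrow> set xs \<subseteq> S \<Longrightarrow> length xs \<le> card S"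
  by (metis card_mono distinct_card)

lemma Sup_nat_eq_bound_iff:
  fixes K :: "nat set"
  assumes "\<forall>k\<in>K. k \<le> n" "0 < n"
  shows "Sup K = n \<longleftrightarrow> n \<in> K"
proof
  assume "Sup K = n"
  moreover have "K \<noteq> {}" using calculation assms(2) by auto
  moreover have "finite K" using assms(1) finite_nat_set_iff_bounded_le by blast
  ultimately show "n \<in> K" using Max_in Sup_nat_def by metis
next
  assume "n \<in> K"
  then show "Sup K = n" using assms(1) by (meson cSup_eq_maximum)
qed

lemma edge_shatters_iff:
  "edge_shatters V E A \<longleftrightarrow> A \<subseteq> V \<and> (\<forall>B\<subseteq>A. \<exists>w\<in>V. \<forall>x\<in>A. E w x \<longleftrightarrow> x \<in> B)"
proof (cases "A \<subseteq> V")
  case True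
  then have trace: "A \<inter> nbhd V E w = {x \<in> A. E w x}" for w
    unfolding nbhd_def by blast
  have "(\<lambda>w. {x \<in> A. E w x}) ` V = Pow A \<longleftrightarrow> (\<forall>B\<subseteq>A. \<exists>w\<in>V. B = {x \<in> A. E w x})"
    by blast
  also have "\<dots> \<longleftrightarrow> (\<forall>B\<subseteq>A. \<exists>w\<in>V. \<forall>x\<in>A. E w x \<longleftrightarrow> x \<in> B)"
    by (intro all_cong1 imp_cong refl bex_cong) blast
  finally show ?thesis
    unfolding edge_shatters_def trace using True by blast
qed (simp add: edge_shatters_def)

lemma edge_shatters_witness:
  assumes "edge_shatters V E A" "B \<subseteq> A"
  obtains w where "w \<in> V" "\<forall>x\<in>A. E w x \<longleftrightarrow> x \<in> B"
proof -
  have "\<exists>w\<in>V. \<forall>x\<in>A. E w x \<longleftrightarrow> x \<in> B"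
    using assms unfolding edge_shatters_iff by blast
  then show ?thesis using that by blast
qed

lemma edge_shatters_image:
  assumes "edge_shatters V E A" "f ` V \<subseteq> V'"
    and "\<And>x y. x \<in> V \<Longrightarrow> y \<in> V \<Longrightarrow> E' (f x) (f y) \<longleftrightarrow> E x y"
  shows "edge_shatters V' E' (f ` A)"
  unfolding edge_shatters_iff
proof (intro conjI allI impI)
  have AV: "A \<subseteq> V"
    using assms(1) unfolding edge_shatters_iff by blast
  then show "f ` A \<subseteq> V'" using assms(2) by blast
  fix B' assume "B' \<subseteq> f ` A"
  obtain w where "w \<in> V" "\<forall>x\<in>A. E w x \<longleftrightarrow> x \<in> A \<inter> f -` B'"
    using edge_shatters_witness[OF assms(1), of "A \<inter> f -` B'"] by blast
  then have "\<forall>y\<in>f ` A. E' (f w) y \<longleftrightarrow> y \<in> B'"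
    using assms(3) AV \<open>B' \<subseteq> f ` A\<close> by auto
  then show "\<exists>w\<in>V'. \<forall>y\<in>f ` A. E' w y \<longleftrightarrow> y \<in> B'"
    using \<open>w \<in> V\<close> assms(2) by blast
qed

lemma edge_shatters_triple:
  assumes "{a, b, c} \<subseteq> V" "W \<subseteq> V"
    and "\<forall>p q r. \<exists>w\<in>W. (E w a \<longleftrightarrow> p) \<and> (E w b \<longleftrightarrow> q) \<and> (E w c \<longleftrightarrow> r)"
  shows "edge_shatters V E {a, b, c}"
  unfolding edge_shatters_iff
proof (intro conjI allI impI)
  fix B assume "B \<subseteq> {a, b, c}"
  obtain w where "w \<in> W" "E w a \<longleftrightarrow> a \<in> B" "E w b \<longleftrightarrow> b \<in> B" "E w c \<longleftrightarrow> c \<in> B"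
    using assms(3) by blast
  then show "\<exists>w\<in>V. \<forall>x\<in>{a, b, c}. E w x \<longleftrightarrow> x \<in> B"
    using assms(2) by blast
qed (use assms(1) in blast)

definition agree_off :: "nat \<Rightarrow> nat \<Rightarrow> 'a list \<Rightarrow> 'a list \<Rightarrow> bool" where
  "agree_off d i x y \<longleftrightarrow> (\<forall>l<d. l \<noteq> i \<longrightarrow> x ! l = y ! l)"

lemma agree_off_sym: "agree_off d i x y \<Longrightarrow> agree_off d i y x"
  unfolding agree_off_def by simp

lemma agree_off_trans: "agree_off d i x y \<Longrightarrow> agree_off d i y z \<Longrightarrow> agree_off d i x z"
  unfolding agree_off_def by simp

lemma agree_off_nth_eq: "agree_off d i x y \<Longrightarrow> x ! i = y ! i \<Longrightarrow> \<forall>l<d. x ! l = y ! l"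
  unfolding agree_off_def by metis

lemma hamming_vertices_eqI:
  "x \<in> hamming_vertices d S \<Longrightarrow> y \<in> hamming_vertices d S \<Longrightarrow> \<forall>l<d. x ! l = y ! l \<Longrightarrow> x = y"
  unfolding hamming_vertices_def by (simp add: nth_equalityI)

lemma hamming_vertices_nth: "x \<in> hamming_vertices d S \<Longrightarrow> l < d \<Longrightarrow> x ! l \<in> S"
  unfolding hamming_vertices_def by auto

lemma agree_off_vertices_nth_neq:
  assumes "x \<in> hamming_vertices d S" "y \<in> hamming_vertices d S" "x \<noteq> y" "agree_off d i x y"
  shows "x ! i \<noteq> y ! i"
  using assms hamming_vertices_eqI agree_off_nth_eq by blast

lemma hamming_adj_iff: "hamming_adj d x y \<longleftrightarrow> (\<exists>i<d. x ! i \<noteq> y ! i \<and> agree_off d i x y)"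
proof
  assume "hamming_adj d x y"
  then obtain i where "{l. l < d \<and> x ! l \<noteq> y ! l} = {i}"
    unfolding hamming_adj_def by (auto simp: card_Suc_eq)
  then show "\<exists>i<d. x ! i \<noteq> y ! i \<and> agree_off d i x y"
    unfolding agree_off_def by blast
next
  assume "\<exists>i<d. x ! i \<noteq> y ! i \<and> agree_off d i x y"
  then obtain i where "i < d" "x ! i \<noteq> y ! i" "agree_off d i x y" by blast
  then have "{l. l < d \<and> x ! l \<noteq> y ! l} = {i}"
    unfolding agree_off_def by blast
  then show "hamming_adj d x y" unfolding hamming_adj_def by simp
qed

lemma hamming_adj_sym: "hamming_adj d x y \<longleftrightarrow> hamming_adj d y x"
proof -
  have "{l. l < d \<and> x ! l \<noteq> y ! l} = {l. l < d \<and> y ! l \<noteq> x ! l}" by auto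
  then show ?thesis unfolding hamming_adj_def by simp
qed

lemma hamming_adj_cong:
  assumes "\<forall>l<d. x ! l = y ! l"
  shows "hamming_adj d x z \<longleftrightarrow> hamming_adj d y z"
proof -
  have "{l. l < d \<and> x ! l \<noteq> z ! l} = {l. l < d \<and> y ! l \<noteq> z ! l}" using assms by auto
  then show ?thesis unfolding hamming_adj_def by simp
qed

lemma hamming_adj_along_line:
  assumes "agree_off d i x y" "i < d"
  shows "hamming_adj d x y \<longleftrightarrow> x ! i \<noteq> y ! i"
  using assms agree_off_nth_eq[OF assms(1)] unfolding hamming_adj_iff agree_off_def by auto

lemma neighbour_direction:
  assumes "hamming_adj d v x"
  obtains i where "i < d" "agree_off d i x v" "x ! i \<noteq> v ! i"
  using assms unfolding hamming_adj_iff agree_off_def by metis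

lemma hamming_adj_0: "\<not> hamming_adj 0 xs ys"
  unfolding hamming_adj_def by simp

lemma hamming_adj_Cons:
  assumes "length xs = n" "length ys = n"
  shows "hamming_adj (Suc n) (x # xs) (y # ys) \<longleftrightarrow> (if x = y then hamming_adj n xs ys else xs = ys)"
proof -
  have "{i. i < Suc n \<and> (x # xs) ! i \<noteq> (y # ys) ! i}
      = (if x = y then {} else {0}) \<union> Suc ` {i. i < n \<and> xs ! i \<noteq> ys ! i}"
    by (auto simp: less_Suc_eq_0_disj)
  then show ?thesis
    unfolding hamming_adj_def using assms by (auto simp: card_image list_eq_iff_nth_eq)
qed

lemma hamming_adj_append:
  assumes "length xs = k" "length ys = k" "k \<le> d"
  shows "hamming_adj d (xs @ zs) (ys @ zs) \<longleftrightarrow> hamming_adj k xs ys"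
proof -
  have "{i. i < d \<and> (xs @ zs) ! i \<noteq> (ys @ zs) ! i} = {i. i < k \<and> xs ! i \<noteq> ys ! i}"
    using assms by (auto simp: nth_append)
  then show ?thesis unfolding hamming_adj_def by simp
qed

lemma common_neighbour_on_line:
  assumes "i < d" "agree_off d i x y" "x ! i \<noteq> y ! i" "hamming_adj d w x" "hamming_adj d w y"
  shows "agree_off d i w x"
proof -
  obtain k where k: "k < d" "w ! k \<noteq> x ! k" "agree_off d k w x"
    using assms(4) unfolding hamming_adj_iff by blast
  obtain m where m: "m < d" "w ! m \<noteq> y ! m" "agree_off d m w y"
    using assms(5) unfolding hamming_adj_iff by blast
  have "k = i"
  proof (rule ccontr)
    assume "k \<noteq> i"
    then have "m = i" using k m assms(1,2,3) unfolding agree_off_def by metis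
    then show False using k m assms(2) \<open>k \<noteq> i\<close> unfolding agree_off_def by metis
  qed
  then show ?thesis using k(3) by simp
qed

lemma common_neighbour_on_line_nonadjacent_unique:
  assumes "i < d" "agree_off d i a b" "a ! i \<noteq> b ! i" "agree_off d i c a" "agree_off d i e a"
    and "hamming_adj d w a" "hamming_adj d w b" "\<not> hamming_adj d w c" "\<not> hamming_adj d w e"
  shows "\<forall>l<d. c ! l = e ! l"
proof -
  have w: "agree_off d i w a"
    using common_neighbour_on_line assms(1-3,6,7) by blast
  have "w ! i = c ! i"
    using hamming_adj_along_line[OF agree_off_trans[OF w agree_off_sym[OF assms(4)]] assms(1)]
      assms(8) by simp
  moreover have "w ! i = e ! i"
    using hamming_adj_along_line[OF agree_off_trans[OF w agree_off_sym[OF assms(5)]] assms(1)]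
      assms(9) by simp
  ultimately have "c ! i = e ! i" by simp
  then show ?thesis
    by (rule agree_off_nth_eq[OF agree_off_trans[OF assms(4) agree_off_sym[OF assms(5)]]])
qed

lemma common_neighbour_of_square:
  assumes "i < d" "j < d" "i \<noteq> j"
    and x: "agree_off d i x v" "x ! i \<noteq> v ! i"
    and y: "agree_off d j y v" "y ! j \<noteq> v ! j"
    and "hamming_adj d w x" "hamming_adj d w y"
  shows "(\<forall>l<d. w ! l = v ! l) \<or> (agree_off d j w x \<and> w ! j = y ! j)"
proof -
  obtain k where k: "k < d" "w ! k \<noteq> x ! k" "agree_off d k w x"
    using assms(8) unfolding hamming_adj_iff by blast
  obtain m where m: "m < d" "w ! m \<noteq> y ! m" "agree_off d m w y"
    using assms(9) unfolding hamming_adj_iff by blast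
  have "x ! i \<noteq> y ! i" "x ! j \<noteq> y ! j"
    using assms(1-3) x y unfolding agree_off_def by metis+
  then have "i = k \<or> i = m" "j = k \<or> j = m"
    using k(3) m(3) assms(1,2) unfolding agree_off_def by metis+
  then consider "k = i" "m = j" | "k = j" "m = i"
    using \<open>i \<noteq> j\<close> by blast
  then show ?thesis
  proof cases
    case 1
    then have "\<forall>l<d. w ! l = v ! l"
      using k(3) m(3) x(1) y(1) \<open>i \<noteq> j\<close> unfolding agree_off_def by metis
    then show ?thesis ..
  next
    case 2
    then show ?thesis using k(3) m(3) \<open>i \<noteq> j\<close> assms(2) unfolding agree_off_def by metis
  qed
qed

lemma square_corner_adj:
  assumes "i < d" "i \<noteq> j"
    and "agree_off d i a v" "a ! i \<noteq> v ! i" "agree_off d j b v"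
    and "agree_off d j w a" "w ! j = b ! j"
  shows "hamming_adj d w b"
proof -
  have "agree_off d i w b"
    using assms(2,3,5,6,7) unfolding agree_off_def by metis
  moreover have "w ! i \<noteq> b ! i"
    using assms(1-6) unfolding agree_off_def by metis
  ultimately show ?thesis
    unfolding hamming_adj_iff using assms(1) by blast
qed

lemma square_corner_nonadjacent_third_value:
  assumes "i < d" "j < d" "i \<noteq> j"
    and "agree_off d i a v" "a ! i \<noteq> v ! i" "agree_off d j x v" "x ! j \<noteq> v ! j"
    and "agree_off d j w a" "w ! j \<noteq> a ! j" "\<not> hamming_adj d w x"
  shows "distinct [x ! j, v ! j, w ! j]"
proof -
  have "w ! j \<noteq> x ! j"
    using square_corner_adj[OF assms(1,3,4,5,6,8)] assms(10) by blast
  moreover have "v ! j = a ! j"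
    using assms(2,3,4) unfolding agree_off_def by simp
  ultimately show ?thesis using assms(7,9) by auto
qed

lemma shattered_four_same_direction:
  assumes a: "i < d" "agree_off d i a v" "a ! i \<noteq> v ! i"
    and b: "j < d" "agree_off d j b v" "b ! j \<noteq> v ! j"
    and v: "hamming_adj d v c" "hamming_adj d v e"
    and "edge_shatters V (hamming_adj d) A" "{a, b, c, e} \<subseteq> A" "distinct [a, b, c, e]"
  shows "i = j"
proof (rule ccontr)
  assume "i \<noteq> j"
  have "{a, b, c} \<subseteq> A" "{a, b, e} \<subseteq> A"
    using assms(10) by auto
  obtain w1 where "\<forall>x\<in>A. hamming_adj d w1 x \<longleftrightarrow> x \<in> {a, b, c}"
    using edge_shatters_witness[OF assms(9) \<open>{a, b, c} \<subseteq> A\<close>] by metis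
  then have w1: "hamming_adj d w1 a" "hamming_adj d w1 b" "hamming_adj d w1 c"
      "\<not> hamming_adj d w1 e"
    using assms(10,11) by auto
  obtain w2 where "\<forall>x\<in>A. hamming_adj d w2 x \<longleftrightarrow> x \<in> {a, b, e}"
    using edge_shatters_witness[OF assms(9) \<open>{a, b, e} \<subseteq> A\<close>] by metis
  then have w2: "hamming_adj d w2 a" "hamming_adj d w2 b" "\<not> hamming_adj d w2 c"
    using assms(10,11) by auto
  have "\<not> (\<forall>l<d. w1 ! l = v ! l)" "\<not> (\<forall>l<d. w2 ! l = v ! l)"
    using hamming_adj_cong v w1(4) w2(3) by blast+
  then have "agree_off d j w1 a \<and> w1 ! j = b ! j" "agree_off d j w2 a \<and> w2 ! j = b ! j"
    using common_neighbour_of_square[OF a(1) b(1) \<open>i \<noteq> j\<close> a(2,3) b(2,3)] w1(1,2) w2(1,2) by blast+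
  then have "\<forall>l<d. w1 ! l = w2 ! l"
    by (metis agree_off_nth_eq agree_off_sym agree_off_trans)
  then show False using hamming_adj_cong w1(3) w2(3) by blast
qed

lemma shattered_card_le_three:
  assumes shatters: "edge_shatters (hamming_vertices d S) (hamming_adj d) A"
  shows "card A \<le> 3"
proof (rule ccontr)
  assume "\<not> card A \<le> 3"
  then obtain xs where "length xs = 4" "distinct xs" "set xs \<subseteq> A"
    using obtain_distinct_list[of 4 A] by auto
  then obtain a b c e where distinct: "distinct [a, b, c, e]" and sub: "{a, b, c, e} \<subseteq> A"
    by (auto simp: numeral_eq_Suc length_Suc_conv)
  have V: "a \<in> hamming_vertices d S" "b \<in> hamming_vertices d S" "c \<in> hamming_vertices d S"
      "e \<in> hamming_vertices d S"
    using shatters sub unfolding edge_shatters_iff by auto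
  obtain v where "\<forall>x\<in>A. hamming_adj d v x \<longleftrightarrow> x \<in> {a, b, c, e}"
    using edge_shatters_witness[OF shatters sub] by metis
  then have v: "hamming_adj d v a" "hamming_adj d v b" "hamming_adj d v c" "hamming_adj d v e"
    using sub by auto
  obtain ia where ia: "ia < d" "agree_off d ia a v" "a ! ia \<noteq> v ! ia"
    using v(1) by (rule neighbour_direction)
  obtain ib where ib: "ib < d" "agree_off d ib b v" "b ! ib \<noteq> v ! ib"
    using v(2) by (rule neighbour_direction)
  obtain ic where ic: "ic < d" "agree_off d ic c v" "c ! ic \<noteq> v ! ic"
    using v(3) by (rule neighbour_direction)
  obtain ie where ie: "ie < d" "agree_off d ie e v" "e ! ie \<noteq> v ! ie"
    using v(4) by (rule neighbour_direction)
  have "ia = ib"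
    by (rule shattered_four_same_direction[OF ia ib v(3,4) shatters sub distinct])
  moreover have "ia = ic"
    by (rule shattered_four_same_direction[OF ia ic v(2,4) shatters]) (use sub distinct in auto)
  moreover have "ia = ie"
    by (rule shattered_four_same_direction[OF ia ie v(2,3) shatters]) (use sub distinct in auto)
  ultimately have b_line: "agree_off d ia b a" and c_line: "agree_off d ia c a"
      and e_line: "agree_off d ia e a"
    using ib(2) ic(2) ie(2) agree_off_trans[OF _ agree_off_sym[OF ia(2)]] by simp_all
  have "{a, b} \<subseteq> A" using sub by simp
  then obtain wab where "\<forall>x\<in>A. hamming_adj d wab x \<longleftrightarrow> x \<in> {a, b}"
    using edge_shatters_witness[OF shatters] by metis
  then have "hamming_adj d wab a" "hamming_adj d wab b"
      "\<not> hamming_adj d wab c" "\<not> hamming_adj d wab e"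
    using sub distinct by auto
  moreover have "a ! ia \<noteq> b ! ia"
    using agree_off_vertices_nth_neq[OF V(1,2) _ agree_off_sym[OF b_line]] distinct by simp
  ultimately have "\<forall>l<d. c ! l = e ! l"
    using common_neighbour_on_line_nonadjacent_unique[OF ia(1) agree_off_sym[OF b_line] _ c_line
        e_line] by blast
  then have "c = e"
    using hamming_vertices_eqI[OF V(3,4)] by blast
  then show False using distinct by simp
qed

lemma shattered_triple_on_line:
  assumes "finite S" "edge_shatters (hamming_vertices d S) (hamming_adj d) A"
    and "{a, b, c} \<subseteq> A" "distinct [a, b, c]" "v \<in> hamming_vertices d S"
    and a: "i < d" "agree_off d i a v" "a ! i \<noteq> v ! i"
    and b: "agree_off d i b v" "b ! i \<noteq> v ! i"
    and c: "agree_off d i c v" "c ! i \<noteq> v ! i"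
  shows "4 \<le> card S \<and> 2 \<le> d"
proof
  have V: "a \<in> hamming_vertices d S" "b \<in> hamming_vertices d S" "c \<in> hamming_vertices d S"
    using assms(2,3) unfolding edge_shatters_iff by auto
  have ab: "agree_off d i a b" and ac: "agree_off d i a c" and bc: "agree_off d i b c"
    using agree_off_trans agree_off_sym a(2) b(1) c(1) by metis+
  have "distinct [a ! i, b ! i, c ! i, v ! i]"
    using agree_off_vertices_nth_neq[OF V(1,2) _ ab] agree_off_vertices_nth_neq[OF V(1,3) _ ac]
      agree_off_vertices_nth_neq[OF V(2,3) _ bc] \<open>distinct [a, b, c]\<close> a(3) b(2) c(2)
    by auto
  moreover have "set [a ! i, b ! i, c ! i, v ! i] \<subseteq> S"
    using V \<open>v \<in> hamming_vertices d S\<close> \<open>i < d\<close> hamming_vertices_nth by auto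
  ultimately show "4 \<le> card S"
    using distinct_length_le_card[OF \<open>finite S\<close>] by fastforce
  have "{a} \<subseteq> A" using assms(3) by simp
  then obtain w where "\<forall>x\<in>A. hamming_adj d w x \<longleftrightarrow> x \<in> {a}"
    using edge_shatters_witness[OF assms(2)] by metis
  then have w: "hamming_adj d w a" "\<not> hamming_adj d w b" "\<not> hamming_adj d w c"
    using assms(3,4) by auto
  obtain m where m: "m < d" "agree_off d m w a" "w ! m \<noteq> a ! m"
    using w(1) hamming_adj_sym neighbour_direction by metis
  have "m \<noteq> i"
  proof
    assume "m = i"
    then have "agree_off d i w b" "agree_off d i w c"
      using m(2) ab ac agree_off_trans by blast+
    then have "w ! i = b ! i" "w ! i = c ! i"
      using hamming_adj_along_line \<open>i < d\<close> w(2,3) by blast+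
    then show False
      using agree_off_vertices_nth_neq[OF V(2,3) _ bc] \<open>distinct [a, b, c]\<close> by simp
  qed
  then show "2 \<le> d" using m(1) \<open>i < d\<close> by linarith
qed

lemma shattered_pair_on_line:
  assumes "finite S" "edge_shatters (hamming_vertices d S) (hamming_adj d) A"
    and "{a, b, c} \<subseteq> A" "distinct [a, b, c]" "v \<in> hamming_vertices d S" "hamming_adj d v c"
    and a: "i < d" "agree_off d i a v" "a ! i \<noteq> v ! i"
    and b: "agree_off d i b v" "b ! i \<noteq> v ! i"
  shows "4 \<le> card S"
proof -
  have V: "a \<in> hamming_vertices d S" "b \<in> hamming_vertices d S"
    using assms(2,3) unfolding edge_shatters_iff by auto
  have "{a, b} \<subseteq> A" using assms(3) by simp
  then obtain w where "w \<in> hamming_vertices d S" "\<forall>x\<in>A. hamming_adj d w x \<longleftrightarrow> x \<in> {a, b}"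
    using edge_shatters_witness[OF assms(2)] by metis
  then have w: "w \<in> hamming_vertices d S"
      "hamming_adj d w a" "hamming_adj d w b" "\<not> hamming_adj d w c"
    using assms(3,4) by auto
  have ab: "agree_off d i a b"
    using agree_off_trans agree_off_sym a(2) b(1) by metis
  have "a ! i \<noteq> b ! i"
    using agree_off_vertices_nth_neq[OF V _ ab] \<open>distinct [a, b, c]\<close> by simp
  then have wa: "agree_off d i w a"
    using common_neighbour_on_line[OF \<open>i < d\<close> ab] w(2,3) by blast
  have "w ! i \<noteq> v ! i"
  proof
    assume "w ! i = v ! i"
    then have "\<forall>l<d. w ! l = v ! l"
      using agree_off_nth_eq agree_off_trans[OF wa a(2)] by blast
    then show False using hamming_adj_cong \<open>hamming_adj d v c\<close> w(4) by blast
  qed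
  moreover have "w ! i \<noteq> a ! i" "w ! i \<noteq> b ! i"
    using hamming_adj_along_line[OF wa \<open>i < d\<close>]
      hamming_adj_along_line[OF agree_off_trans[OF wa ab] \<open>i < d\<close>] w(2,3) by blast+
  ultimately have "distinct [a ! i, b ! i, v ! i, w ! i]"
    using \<open>a ! i \<noteq> b ! i\<close> a(3) b(2) by auto
  moreover have "set [a ! i, b ! i, v ! i, w ! i] \<subseteq> S"
    using V w(1) \<open>v \<in> hamming_vertices d S\<close> \<open>i < d\<close> hamming_vertices_nth by auto
  ultimately show "4 \<le> card S"
    using distinct_length_le_card[OF \<open>finite S\<close>] by fastforce
qed

lemma shattered_triple_three_directions:
  assumes "finite S" "edge_shatters (hamming_vertices d S) (hamming_adj d) A"
    and "{a, b, c} \<subseteq> A" "distinct [a, b, c]" "v \<in> hamming_vertices d S" "distinct [ia, ib, ic]"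
    and a: "ia < d" "agree_off d ia a v" "a ! ia \<noteq> v ! ia"
    and b: "ib < d" "agree_off d ib b v" "b ! ib \<noteq> v ! ib"
    and c: "ic < d" "agree_off d ic c v" "c ! ic \<noteq> v ! ic"
  shows "3 \<le> card S \<or> (4 \<le> d \<and> 2 \<le> card S)"
proof -
  have V: "a \<in> hamming_vertices d S" "b \<in> hamming_vertices d S" "c \<in> hamming_vertices d S"
    using assms(2,3) unfolding edge_shatters_iff by auto
  have "{a} \<subseteq> A" using assms(3) by simp
  then obtain w where "w \<in> hamming_vertices d S" "\<forall>x\<in>A. hamming_adj d w x \<longleftrightarrow> x \<in> {a}"
    using edge_shatters_witness[OF assms(2)] by metis
  then have w: "w \<in> hamming_vertices d S"
      "hamming_adj d w a" "\<not> hamming_adj d w b" "\<not> hamming_adj d w c"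
    using assms(3,4) by auto
  obtain m where m: "m < d" "agree_off d m w a" "w ! m \<noteq> a ! m"
    using w(2) hamming_adj_sym neighbour_direction by metis
  have in_S: "x ! m \<in> S" if "x \<in> hamming_vertices d S" for x
    using hamming_vertices_nth[OF that m(1)] .
  have "2 \<le> card S"
    using distinct_length_le_card[OF \<open>finite S\<close>, of "[a ! m, w ! m]"] in_S m(3) V(1) w(1)
    by auto
  have three_symbols: "3 \<le> card S" if "distinct [x ! m, v ! m, w ! m]" "x \<in> hamming_vertices d S"
    for x
    using distinct_length_le_card[OF \<open>finite S\<close> that(1)] in_S that(2) w(1)
      \<open>v \<in> hamming_vertices d S\<close> by auto
  consider "m = ia" | "m = ib" | "m = ic" | "distinct [ia, ib, ic, m]"
    using \<open>distinct [ia, ib, ic]\<close> by auto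
  then show ?thesis
  proof cases
    case 1
    have "hamming_adj d v b"
      using hamming_adj_along_line[OF agree_off_sym[OF b(2)] b(1)] b(3) by simp
    then have "\<not> (\<forall>l<d. w ! l = v ! l)"
      using hamming_adj_cong w(3) by blast
    then have "w ! ia \<noteq> v ! ia"
      using agree_off_nth_eq agree_off_trans[OF m(2)[unfolded 1] a(2)] by blast
    then show ?thesis
      using three_symbols[OF _ V(1)] m(3) a(3) 1 by auto
  next
    case 2
    then have "distinct [b ! m, v ! m, w ! m]"
      using square_corner_nonadjacent_third_value[OF a(1) b(1) _ a(2,3) b(2,3) _ _ w(3)] m(2,3)
        \<open>distinct [ia, ib, ic]\<close> by auto
    then show ?thesis using three_symbols[OF _ V(2)] by simp
  next
    case 3
    then have "distinct [c ! m, v ! m, w ! m]"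
      using square_corner_nonadjacent_third_value[OF a(1) c(1) _ a(2,3) c(2,3) _ _ w(4)] m(2,3)
        \<open>distinct [ia, ib, ic]\<close> by auto
    then show ?thesis using three_symbols[OF _ V(3)] by simp
  next
    case 4
    then have "length [ia, ib, ic, m] \<le> card {..<d}"
      using distinct_length_le_card[of "{..<d}"] a(1) b(1) c(1) m(1) by simp
    then show ?thesis using \<open>2 \<le> card S\<close> by simp
  qed
qed

lemma shattered_triple_dimension_bounds:
  assumes "finite S" "edge_shatters (hamming_vertices d S) (hamming_adj d) A" "card A = 3"
  shows "(3 \<le> d \<and> 3 \<le> card S) \<or> (2 \<le> d \<and> 4 \<le> card S) \<or> (4 \<le> d \<and> 2 \<le> card S)"
proof -
  obtain a b c where A: "A = {a, b, c}" and distinct: "distinct [a, b, c]"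
    using \<open>card A = 3\<close> card_3_iff by (metis distinct_length_2_or_more distinct_singleton)
  then obtain v where "v \<in> hamming_vertices d S" "\<forall>x\<in>A. hamming_adj d v x \<longleftrightarrow> x \<in> A"
    using edge_shatters_witness[OF assms(2) order_refl] by metis
  then have v: "v \<in> hamming_vertices d S"
      "hamming_adj d v a" "hamming_adj d v b" "hamming_adj d v c"
    using A by auto
  obtain ia where ia: "ia < d" "agree_off d ia a v" "a ! ia \<noteq> v ! ia"
    using v(2) by (rule neighbour_direction)
  obtain ib where ib: "ib < d" "agree_off d ib b v" "b ! ib \<noteq> v ! ib"
    using v(3) by (rule neighbour_direction)
  obtain ic where ic: "ic < d" "agree_off d ic c v" "c ! ic \<noteq> v ! ic"
    using v(4) by (rule neighbour_direction)
  have sub: "{a, b, c} \<subseteq> A" "{a, c, b} \<subseteq> A" "{b, c, a} \<subseteq> A"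
    using A by auto
  have "distinct [a, c, b]" "distinct [b, c, a]"
    using distinct by auto
  note triple = \<open>finite S\<close> assms(2)
  consider "ia = ib" "ia = ic" | "ia = ib" "ia \<noteq> ic" | "ia = ic" "ia \<noteq> ib"
    | "ib = ic" "ia \<noteq> ib" | "distinct [ia, ib, ic]"
    by auto
  then show ?thesis
  proof cases
    case 1
    then show ?thesis
      using shattered_triple_on_line[OF triple sub(1) distinct v(1) ia ib(2,3)[folded 1(1)]
          ic(2,3)[folded 1(2)]] by simp
  next
    case 2
    then show ?thesis
      using shattered_pair_on_line[OF triple sub(1) distinct v(1,4) ia ib(2,3)[folded 2(1)]]
        ia(1) ic(1) by auto
  next
    case 3
    then show ?thesis
      using shattered_pair_on_line[OF triple sub(2) \<open>distinct [a, c, b]\<close> v(1,3) ia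
          ic(2,3)[folded 3(1)]] ia(1) ib(1) by auto
  next
    case 4
    then show ?thesis
      using shattered_pair_on_line[OF triple sub(3) \<open>distinct [b, c, a]\<close> v(1,2) ib
          ic(2,3)[folded 4(1)]] ia(1) ib(1) by auto
  next
    case 5
    then have "3 \<le> d" using ia(1) ib(1) ic(1) by auto
    then show ?thesis
      using shattered_triple_three_directions[OF triple sub(1) distinct v(1) 5 ia ib ic] by auto
  qed
qed

lemma edge_shatters_hamming_3_3:
  assumes "distinct [x0, x1, x2]" "{x0, x1, x2} \<subseteq> S"
  shows "edge_shatters (hamming_vertices 3 S) (hamming_adj 3)
    {[x1, x0, x0], [x0, x1, x0], [x0, x0, x1]}"
proof (rule edge_shatters_triple)
  let ?W = "{[x0, x0, x0], [x1, x1, x0], [x1, x0, x1], [x2, x0, x0],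
             [x0, x1, x1], [x0, x2, x0], [x0, x0, x2], [x1, x0, x0]}"
  show "?W \<subseteq> hamming_vertices 3 S"
    using assms(2) by (simp add: hamming_vertices_def)
  show "\<forall>p q r. \<exists>w\<in>?W. (hamming_adj 3 w [x1, x0, x0] \<longleftrightarrow> p) \<and>
      (hamming_adj 3 w [x0, x1, x0] \<longleftrightarrow> q) \<and> (hamming_adj 3 w [x0, x0, x1] \<longleftrightarrow> r)"
    using assms(1) not_sym[of x0 x1] not_sym[of x0 x2] not_sym[of x1 x2]
    by (simp add: numeral_eq_Suc One_nat_def hamming_adj_Cons hamming_adj_0) blast
qed (use assms in \<open>simp add: hamming_vertices_def\<close>)

lemma edge_shatters_hamming_2_4:
  assumes "distinct [x0, x1, x2, x3]" "{x0, x1, x2, x3} \<subseteq> S"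
  shows "edge_shatters (hamming_vertices 2 S) (hamming_adj 2) {[x1, x0], [x2, x0], [x0, x1]}"
proof (rule edge_shatters_triple)
  let ?W = "{[x0, x0], [x3, x0], [x1, x1], [x1, x2], [x2, x1], [x2, x2], [x3, x1], [x0, x1]}"
  show "?W \<subseteq> hamming_vertices 2 S"
    using assms(2) by (simp add: hamming_vertices_def)
  show "\<forall>p q r. \<exists>w\<in>?W. (hamming_adj 2 w [x1, x0] \<longleftrightarrow> p) \<and>
      (hamming_adj 2 w [x2, x0] \<longleftrightarrow> q) \<and> (hamming_adj 2 w [x0, x1] \<longleftrightarrow> r)"
    using assms(1) not_sym[of x0 x1] not_sym[of x0 x2] not_sym[of x1 x2] not_sym[of x0 x3]
      not_sym[of x1 x3] not_sym[of x2 x3]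
    by (simp add: numeral_eq_Suc One_nat_def hamming_adj_Cons hamming_adj_0) blast
qed (use assms in \<open>simp add: hamming_vertices_def\<close>)

lemma edge_shatters_hamming_4_2:
  assumes "x0 \<noteq> x1" "{x0, x1} \<subseteq> S"
  shows "edge_shatters (hamming_vertices 4 S) (hamming_adj 4)
    {[x1, x0, x0, x0], [x0, x1, x0, x0], [x0, x0, x1, x0]}"
proof (rule edge_shatters_triple)
  let ?W = "{[x0, x0, x0, x0], [x1, x1, x0, x0], [x1, x0, x1, x0], [x1, x0, x0, x1],
             [x0, x1, x1, x0], [x0, x1, x0, x1], [x0, x0, x1, x1], [x1, x0, x0, x0]}"
  show "?W \<subseteq> hamming_vertices 4 S"
    using assms(2) by (simp add: hamming_vertices_def)
  show "\<forall>p q r. \<exists>w\<in>?W. (hamming_adj 4 w [x1, x0, x0, x0] \<longleftrightarrow> p) \<and>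
      (hamming_adj 4 w [x0, x1, x0, x0] \<longleftrightarrow> q) \<and> (hamming_adj 4 w [x0, x0, x1, x0] \<longleftrightarrow> r)"
    using assms(1) not_sym[OF assms(1)]
    by (simp add: numeral_eq_Suc One_nat_def hamming_adj_Cons hamming_adj_0) blast
qed (use assms in \<open>simp add: hamming_vertices_def\<close>)

lemma edge_shatters_hamming_extend:
  assumes "edge_shatters (hamming_vertices k S) (hamming_adj k) A" "k \<le> d" "x0 \<in> S"
  shows "\<exists>A'. edge_shatters (hamming_vertices d S) (hamming_adj d) A' \<and> card A' = card A"
proof -
  define pad where "pad xs = xs @ replicate (d - k) x0" for xs
  have "pad ` hamming_vertices k S \<subseteq> hamming_vertices d S"
    using assms(2,3) by (auto simp: pad_def hamming_vertices_def)
  moreover have "hamming_adj d (pad x) (pad y) \<longleftrightarrow> hamming_adj k x y"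
    if "x \<in> hamming_vertices k S" "y \<in> hamming_vertices k S" for x y
    using hamming_adj_append that assms(2) unfolding pad_def hamming_vertices_def by blast
  ultimately have "edge_shatters (hamming_vertices d S) (hamming_adj d) (pad ` A)"
    using edge_shatters_image[OF assms(1)] by blast
  moreover have "inj pad" by (simp add: pad_def inj_def)
  then have "card (pad ` A) = card A" by (simp add: card_image inj_on_subset)
  ultimately show ?thesis by blast
qed

lemma shattered_triple_exists:
  assumes "finite S" "(3 \<le> d \<and> 3 \<le> card S) \<or> (2 \<le> d \<and> 4 \<le> card S) \<or> (4 \<le> d \<and> 2 \<le> card S)"
  shows "\<exists>A. edge_shatters (hamming_vertices d S) (hamming_adj d) A \<and> card A = 3"
  using assms(2)
proof (elim disjE conjE)
  assume "3 \<le> d" "3 \<le> card S"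
  then obtain xs where "length xs = 3" "distinct xs" "set xs \<subseteq> S"
    using obtain_distinct_list by metis
  then obtain x0 x1 x2 where x: "distinct [x0, x1, x2]" "{x0, x1, x2} \<subseteq> S"
    by (auto simp: numeral_eq_Suc length_Suc_conv)
  then show ?thesis
    using edge_shatters_hamming_extend[OF edge_shatters_hamming_3_3[OF x] \<open>3 \<le> d\<close>, of x0]
    by (simp add: numeral_3_eq_3)
next
  assume "2 \<le> d" "4 \<le> card S"
  then obtain xs where "length xs = 4" "distinct xs" "set xs \<subseteq> S"
    using obtain_distinct_list by metis
  then obtain x0 x1 x2 x3 where x: "distinct [x0, x1, x2, x3]" "{x0, x1, x2, x3} \<subseteq> S"
    by (auto simp: numeral_eq_Suc length_Suc_conv)
  then show ?thesis
    using edge_shatters_hamming_extend[OF edge_shatters_hamming_2_4[OF x] \<open>2 \<le> d\<close>, of x0]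
    by (simp add: numeral_3_eq_3)
next
  assume "4 \<le> d" "2 \<le> card S"
  then obtain xs where "length xs = 2" "distinct xs" "set xs \<subseteq> S"
    using obtain_distinct_list by metis
  then obtain x0 x1 where x: "x0 \<noteq> x1" "{x0, x1} \<subseteq> S"
    by (auto simp: numeral_eq_Suc length_Suc_conv)
  then show ?thesis
    using edge_shatters_hamming_extend[OF edge_shatters_hamming_4_2[OF x] \<open>4 \<le> d\<close>, of x0]
    by (simp add: numeral_3_eq_3)
qed

theorem mainTheorem17:
  fixes d q :: nat and S :: "'a set"
  assumes "finite S" and "card S = q"
  shows "vc_dim_edge (hamming_vertices d S) (hamming_adj d) = 3 \<longleftrightarrow>
           ((d \<ge> 3 \<and> q \<ge> 3) \<or> (d \<ge> 2 \<and> q \<ge> 4) \<or> (d \<ge> 4 \<and> q \<ge> 2))"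
proof -
  let ?shattered = "edge_shatters (hamming_vertices d S) (hamming_adj d)"
  have "\<forall>k\<in>{card A | A. ?shattered A}. k \<le> 3"
    using shattered_card_le_three by blast
  then have "vc_dim_edge (hamming_vertices d S) (hamming_adj d) = 3 \<longleftrightarrow>
      (\<exists>A. ?shattered A \<and> card A = 3)"
    unfolding vc_dim_edge_def by (subst Sup_nat_eq_bound_iff) auto
  also have "\<dots> \<longleftrightarrow> (d \<ge> 3 \<and> q \<ge> 3) \<or> (d \<ge> 2 \<and> q \<ge> 4) \<or> (d \<ge> 4 \<and> q \<ge> 2)"
    using shattered_triple_dimension_bounds[OF assms(1)] shattered_triple_exists[OF assms(1)]
      assms(2) by blast
  finally show ?thesis .
qed

end
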